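(* Let $P$ be a polyhedral map, let $B^u_P$ be the barycentric subdivision $B_P$ with the vertex colours removed, and let $S_i(B_P)$ be the set of automorphisms of $B^u_P$ that map every vertex of (former) colour 0 to a vertex of colour 2 and every vertex of colour 2 to a vertex of colour 0, and map vertices of colour 1 to vertices of colour 1. Then the elements of the group $\mathrm{Aut}(B^u_P)$ are exactly the permutations in $\mathrm{Aut}(B_P)\cup S_i(B_P)$, where $\mathrm{Aut}(B_P)$ is the group of colour-preserving automorphisms of $B_P$.
   Context: A polyhedral map is a 3-connected graph embedded in a closed orientable surface such that every face is an open disc and the closures of any two faces have connected intersection. The barycentric subdivision $B_P$ of $P$ is obtained by adding a vertex inside every face and on every edge and joining each face-vertex to all vertices and edge-vertices on that face's boundary, so that all faces are triangles; original vertices get colour 0, edge-vertices colour 1, face-vertices colour 2. Automorphisms of $B_P$ as a coloured map preserve colours. *)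

theory Defs
  imports Main
begin

text \<open>Combinatorial (flag-system) model of a map on a closed surface. Vertices, edges and faces are
  the orbits of the subgroups generated by (r1,r2), (r0,r2), (r0,r1).
  Two elements are incident iff their orbits share a flag.\<close>

definition gen_orb :: "('f \<Rightarrow> 'f) list \<Rightarrow> 'f \<Rightarrow> 'f set" where
  "gen_orb fs x = {y. (x, y) \<in> {(a, g a) | a g. g \<in> set fs}\<^sup>*}"

definition is_map :: "'f set \<Rightarrow> ('f \<Rightarrow> 'f) \<Rightarrow> ('f \<Rightarrow> 'f) \<Rightarrow> ('f \<Rightarrow> 'f) \<Rightarrow> bool" where
  "is_map \<Phi> r0 r1 r2 \<longleftrightarrow>
     finite \<Phi> \<and> \<Phi> \<noteq> {} \<and>
     (\<forall>r \<in> {r0, r1, r2}. \<forall>x \<in> \<Phi>. r x \<in> \<Phi> \<and> r x \<noteq> x \<and> r (r x) = x) \<and>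
     (\<forall>x \<in> \<Phi>. r0 (r2 x) = r2 (r0 x) \<and> r0 x \<noteq> r2 x) \<and>
     (\<forall>x \<in> \<Phi>. \<forall>y \<in> \<Phi>. y \<in> gen_orb [r0, r1, r2] x)"

definition orientable_map :: "'f set \<Rightarrow> ('f \<Rightarrow> 'f) \<Rightarrow> ('f \<Rightarrow> 'f) \<Rightarrow> ('f \<Rightarrow> 'f) \<Rightarrow> bool" where
  "orientable_map \<Phi> r0 r1 r2 \<longleftrightarrow>
     (\<exists>c :: 'f \<Rightarrow> bool. \<forall>x \<in> \<Phi>. c (r0 x) \<noteq> c x \<and> c (r1 x) \<noteq> c x \<and> c (r2 x) \<noteq> c x)"

definition map_vertices :: "'f set \<Rightarrow> ('f \<Rightarrow> 'f) \<Rightarrow> ('f \<Rightarrow> 'f) \<Rightarrow> ('f \<Rightarrow> 'f) \<Rightarrow> 'f set set" where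
  "map_vertices \<Phi> r0 r1 r2 = gen_orb [r1, r2] ` \<Phi>"

definition map_edges :: "'f set \<Rightarrow> ('f \<Rightarrow> 'f) \<Rightarrow> ('f \<Rightarrow> 'f) \<Rightarrow> ('f \<Rightarrow> 'f) \<Rightarrow> 'f set set" where
  "map_edges \<Phi> r0 r1 r2 = gen_orb [r0, r2] ` \<Phi>"

definition map_faces :: "'f set \<Rightarrow> ('f \<Rightarrow> 'f) \<Rightarrow> ('f \<Rightarrow> 'f) \<Rightarrow> ('f \<Rightarrow> 'f) \<Rightarrow> 'f set set" where
  "map_faces \<Phi> r0 r1 r2 = gen_orb [r0, r1] ` \<Phi>"

definition edge_ends :: "'f set \<Rightarrow> ('f \<Rightarrow> 'f) \<Rightarrow> ('f \<Rightarrow> 'f) \<Rightarrow> ('f \<Rightarrow> 'f) \<Rightarrow> 'f set \<Rightarrow> 'f set set" where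
  "edge_ends \<Phi> r0 r1 r2 e = {v \<in> map_vertices \<Phi> r0 r1 r2. v \<inter> e \<noteq> {}}"

definition map_adj :: "'f set \<Rightarrow> ('f \<Rightarrow> 'f) \<Rightarrow> ('f \<Rightarrow> 'f) \<Rightarrow> ('f \<Rightarrow> 'f) \<Rightarrow> 'f set \<Rightarrow> 'f set \<Rightarrow> bool" where
  "map_adj \<Phi> r0 r1 r2 u w \<longleftrightarrow> (\<exists>e \<in> map_edges \<Phi> r0 r1 r2. edge_ends \<Phi> r0 r1 r2 e = {u, w})"

definition three_connected_map :: "'f set \<Rightarrow> ('f \<Rightarrow> 'f) \<Rightarrow> ('f \<Rightarrow> 'f) \<Rightarrow> ('f \<Rightarrow> 'f) \<Rightarrow> bool" where
  "three_connected_map \<Phi> r0 r1 r2 \<longleftrightarrow>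
     (let V = map_vertices \<Phi> r0 r1 r2; E = map_edges \<Phi> r0 r1 r2 in
       card V \<ge> 4 \<and>
       (\<forall>e \<in> E. card (edge_ends \<Phi> r0 r1 r2 e) = 2) \<and>
       inj_on (edge_ends \<Phi> r0 r1 r2) E \<and>
       (\<forall>S \<subseteq> V. card S \<le> 2 \<longrightarrow>
          (\<forall>u \<in> V - S. \<forall>w \<in> V - S.
             (u, w) \<in> {(a, b). a \<in> V - S \<and> b \<in> V - S \<and> map_adj \<Phi> r0 r1 r2 a b}\<^sup>*)))"

text \<open>Closures of any two distinct faces have connected intersection: the common
  vertices are connected through common edges (the intersection of the closures
  is exactly the union of the common vertices and the closed common edges).\<close>
definition faces_meet_properly :: "'f set \<Rightarrow> ('f \<Rightarrow> 'f) \<Rightarrow> ('f \<Rightarrow> 'f) \<Rightarrow> ('f \<Rightarrow> 'f) \<Rightarrow> bool" where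
  "faces_meet_properly \<Phi> r0 r1 r2 \<longleftrightarrow>
     (\<forall>f \<in> map_faces \<Phi> r0 r1 r2. \<forall>g \<in> map_faces \<Phi> r0 r1 r2. f \<noteq> g \<longrightarrow>
        (let CV = {v \<in> map_vertices \<Phi> r0 r1 r2. v \<inter> f \<noteq> {} \<and> v \<inter> g \<noteq> {}};
             CE = {e \<in> map_edges \<Phi> r0 r1 r2. e \<inter> f \<noteq> {} \<and> e \<inter> g \<noteq> {}} in
         \<forall>u \<in> CV. \<forall>w \<in> CV.
           (u, w) \<in> {(a, b). \<exists>e \<in> CE. edge_ends \<Phi> r0 r1 r2 e = {a, b}}\<^sup>*))"

definition polyhedral_map :: "'f set \<Rightarrow> ('f \<Rightarrow> 'f) \<Rightarrow> ('f \<Rightarrow> 'f) \<Rightarrow> ('f \<Rightarrow> 'f) \<Rightarrow> bool" where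
  "polyhedral_map \<Phi> r0 r1 r2 \<longleftrightarrow>
     is_map \<Phi> r0 r1 r2 \<and> orientable_map \<Phi> r0 r1 r2 \<and>
     three_connected_map \<Phi> r0 r1 r2 \<and> faces_meet_properly \<Phi> r0 r1 r2"

text \<open>Barycentric subdivision: vertices are colour-tagged elements
  (0 = vertex, 1 = edge, 2 = face); triangles correspond to flags.\<close>
definition bary_verts :: "'f set \<Rightarrow> ('f \<Rightarrow> 'f) \<Rightarrow> ('f \<Rightarrow> 'f) \<Rightarrow> ('f \<Rightarrow> 'f) \<Rightarrow> (nat \<times> 'f set) set" where
  "bary_verts \<Phi> r0 r1 r2 =
     ({0} \<times> map_vertices \<Phi> r0 r1 r2) \<union> ({1} \<times> map_edges \<Phi> r0 r1 r2) \<union> ({2} \<times> map_faces \<Phi> r0 r1 r2)"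

definition bary_tris :: "'f set \<Rightarrow> ('f \<Rightarrow> 'f) \<Rightarrow> ('f \<Rightarrow> 'f) \<Rightarrow> ('f \<Rightarrow> 'f) \<Rightarrow> (nat \<times> 'f set) set set" where
  "bary_tris \<Phi> r0 r1 r2 =
     (\<lambda>x. {(0, gen_orb [r1, r2] x), (1, gen_orb [r0, r2] x), (2, gen_orb [r0, r1] x)}) ` \<Phi>"

definition bary_aut_uncol :: "'f set \<Rightarrow> ('f \<Rightarrow> 'f) \<Rightarrow> ('f \<Rightarrow> 'f) \<Rightarrow> ('f \<Rightarrow> 'f) \<Rightarrow> ((nat \<times> 'f set) \<Rightarrow> (nat \<times> 'f set)) set" where
  "bary_aut_uncol \<Phi> r0 r1 r2 =
     {\<pi>. bij_betw \<pi> (bary_verts \<Phi> r0 r1 r2) (bary_verts \<Phi> r0 r1 r2) \<and>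
         (\<forall>x. x \<notin> bary_verts \<Phi> r0 r1 r2 \<longrightarrow> \<pi> x = x) \<and>
         (\<lambda>T. \<pi> ` T) ` bary_tris \<Phi> r0 r1 r2 = bary_tris \<Phi> r0 r1 r2}"

definition bary_aut_col :: "'f set \<Rightarrow> ('f \<Rightarrow> 'f) \<Rightarrow> ('f \<Rightarrow> 'f) \<Rightarrow> ('f \<Rightarrow> 'f) \<Rightarrow> ((nat \<times> 'f set) \<Rightarrow> (nat \<times> 'f set)) set" where
  "bary_aut_col \<Phi> r0 r1 r2 =
     {\<pi> \<in> bary_aut_uncol \<Phi> r0 r1 r2. \<forall>x \<in> bary_verts \<Phi> r0 r1 r2. fst (\<pi> x) = fst x}"

definition bary_aut_swap :: "'f set \<Rightarrow> ('f \<Rightarrow> 'f) \<Rightarrow> ('f \<Rightarrow> 'f) \<Rightarrow> ('f \<Rightarrow> 'f) \<Rightarrow> ((nat \<times> 'f set) \<Rightarrow> (nat \<times> 'f set)) set" where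
  "bary_aut_swap \<Phi> r0 r1 r2 =
     {\<pi> \<in> bary_aut_uncol \<Phi> r0 r1 r2. \<forall>x \<in> bary_verts \<Phi> r0 r1 r2.
        (fst x = 0 \<longrightarrow> fst (\<pi> x) = 2) \<and> (fst x = 2 \<longrightarrow> fst (\<pi> x) = 0) \<and>
        (fst x = 1 \<longrightarrow> fst (\<pi> x) = 1)}"

end

theory Submission
  imports Defs
begin

text \<open>
  The triangles of the barycentric subdivision are the flags, and the triangles of the
  flags x and r_i x share their two vertices of colour other than i. An automorphism
  \<open>\<pi>\<close> of the uncoloured subdivision maps triangles to triangles, so the permutation of
  the three colours it induces on one triangle propagates along the connected flag graph:
  \<open>\<pi>\<close> acts on all colours through a single permutation \<open>\<sigma>\<close>. Being injective, \<open>\<pi>\<close>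
  maps the edge class into the class of colour \<open>\<sigma> 1\<close>, so that class is at least as
  large. In a simple 3-connected map every vertex has at least three neighbours and
  every face at least three sides, so vertex and face orbits contain at least six flags
  while edge orbits contain at most four; hence there are more edges than vertices and
  than faces, \<open>\<sigma> 1 = 1\<close>, and \<open>\<sigma>\<close> either fixes or swaps the colours 0 and 2.
\<close>

section \<open>Orbits of a family of involutions\<close>

lemma gen_orb_self: "x \<in> gen_orb fs x"
  by (simp add: gen_orb_def)

lemma gen_orb_step: "y \<in> gen_orb fs x \<Longrightarrow> g \<in> set fs \<Longrightarrow> g y \<in> gen_orb fs x"
  unfolding gen_orb_def by (auto intro: rtrancl_into_rtrancl)

lemma gen_orb_trans: "y \<in> gen_orb fs x \<Longrightarrow> z \<in> gen_orb fs y \<Longrightarrow> z \<in> gen_orb fs x"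
  unfolding gen_orb_def by (auto intro: rtrancl_trans)

lemma gen_orb_induct [consumes 1, case_names base step]:
  assumes "y \<in> gen_orb fs x"
    and "P x"
    and "\<And>z g. z \<in> gen_orb fs x \<Longrightarrow> P z \<Longrightarrow> g \<in> set fs \<Longrightarrow> P (g z)"
  shows "P y"
proof -
  have "(x, y) \<in> {(a, g a) | a g. g \<in> set fs}\<^sup>*"
    using assms(1) by (simp add: gen_orb_def)
  then show ?thesis
  proof (induction rule: rtrancl_induct)
    case base
    show ?case by fact
  next
    case (step z w)
    then obtain g where "g \<in> set fs" "w = g z"
      by blast
    moreover have "z \<in> gen_orb fs x"
      using step.hyps(1) by (simp add: gen_orb_def)
    ultimately show ?case
      using assms(3) step.IH by blast
  qed
qed

locale involution_orbits =
  fixes \<Phi> :: "'f set" and fs :: "('f \<Rightarrow> 'f) list"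
  assumes involution_closed: "\<And>g x. g \<in> set fs \<Longrightarrow> x \<in> \<Phi> \<Longrightarrow> g x \<in> \<Phi> \<and> g (g x) = x"
begin

lemma gen_orb_subset: "x \<in> \<Phi> \<Longrightarrow> gen_orb fs x \<subseteq> \<Phi>"
proof
  fix y assume "x \<in> \<Phi>" "y \<in> gen_orb fs x"
  from this(2) show "y \<in> \<Phi>"
    by (induction rule: gen_orb_induct) (use \<open>x \<in> \<Phi>\<close> involution_closed in blast)+
qed

lemma gen_orb_sym:
  assumes "x \<in> \<Phi>" "y \<in> gen_orb fs x"
  shows "x \<in> gen_orb fs y"
  using assms(2)
proof (induction rule: gen_orb_induct)
  case base
  show ?case by (rule gen_orb_self)
next
  case (step z g)
  have "z \<in> \<Phi>"
    using gen_orb_subset[OF assms(1)] step.hyps(1) by blast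
  have "g (g z) \<in> gen_orb fs (g z)"
    by (rule gen_orb_step[OF gen_orb_self step.hyps(2)])
  then have "z \<in> gen_orb fs (g z)"
    using involution_closed[OF step.hyps(2) \<open>z \<in> \<Phi>\<close>] by simp
  then show ?case
    using step.IH by (rule gen_orb_trans)
qed

lemma gen_orb_eq:
  assumes "x \<in> \<Phi>" "y \<in> gen_orb fs x"
  shows "gen_orb fs y = gen_orb fs x"
  using gen_orb_trans[OF assms(2)] gen_orb_trans[OF gen_orb_sym[OF assms]] by blast

lemma gen_orb_apply: "g \<in> set fs \<Longrightarrow> x \<in> \<Phi> \<Longrightarrow> gen_orb fs (g x) = gen_orb fs x"
  by (rule gen_orb_eq) (auto intro: gen_orb_step gen_orb_self)

lemma gen_orb_disjoint:
  assumes "x \<in> \<Phi>" "y \<in> \<Phi>" "gen_orb fs x \<noteq> gen_orb fs y"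
  shows "gen_orb fs x \<inter> gen_orb fs y = {}"
proof -
  have "gen_orb fs x = gen_orb fs y" if "z \<in> gen_orb fs x" "z \<in> gen_orb fs y" for z
    using gen_orb_eq[OF assms(1) that(1)] gen_orb_eq[OF assms(2) that(2)] by simp
  then show ?thesis
    using assms(3) by blast
qed

lemma card_eq_sum_card_gen_orb:
  assumes "finite \<Phi>"
  shows "card \<Phi> = (\<Sum>C \<in> gen_orb fs ` \<Phi>. card C)"
proof -
  have "pairwise disjnt (gen_orb fs ` \<Phi>)"
    by (rule pairwise_imageI) (simp add: disjnt_def gen_orb_disjoint)
  moreover have "finite C" if "C \<in> gen_orb fs ` \<Phi>" for C
    using that gen_orb_subset assms finite_subset by blast
  ultimately have "card (\<Union> (gen_orb fs ` \<Phi>)) = (\<Sum>C \<in> gen_orb fs ` \<Phi>. card C)"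
    by (rule card_Union_disjoint)
  moreover have "\<Union> (gen_orb fs ` \<Phi>) = \<Phi>"
    using gen_orb_subset gen_orb_self[of _ fs] by blast
  ultimately show ?thesis
    by simp
qed

lemma mult_card_orbits_le_card:
  assumes "finite \<Phi>" "\<And>x. x \<in> \<Phi> \<Longrightarrow> k \<le> card (gen_orb fs x)"
  shows "k * card (gen_orb fs ` \<Phi>) \<le> card \<Phi>"
proof -
  have "card (gen_orb fs ` \<Phi>) * k \<le> (\<Sum>C \<in> gen_orb fs ` \<Phi>. card C)"
    using sum_bounded_below[of "gen_orb fs ` \<Phi>" k card] assms(2) by auto
  then show ?thesis
    using card_eq_sum_card_gen_orb[OF assms(1)] by (simp add: mult.commute)
qed

lemma card_le_mult_card_orbits:
  assumes "finite \<Phi>" "\<And>x. x \<in> \<Phi> \<Longrightarrow> card (gen_orb fs x) \<le> k"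
  shows "card \<Phi> \<le> k * card (gen_orb fs ` \<Phi>)"
proof -
  have "(\<Sum>C \<in> gen_orb fs ` \<Phi>. card C) \<le> card (gen_orb fs ` \<Phi>) * k"
    using sum_bounded_above[of "gen_orb fs ` \<Phi>" card k] assms(2) by auto
  then show ?thesis
    using card_eq_sum_card_gen_orb[OF assms(1)] by (simp add: mult.commute)
qed

end

section \<open>Automorphisms of the subdivision act on the colours\<close>

lemma finite_image_eq_imp_bij_betw:
  assumes "f ` A = A" "finite A"
  shows "bij_betw f A A"
  using assms finite_surj_inj[OF assms(2) equalityD2[OF assms(1)]] by (simp add: bij_betw_def)

lemma bij_betw_agree_off_point:
  assumes "bij_betw f A B" "bij_betw g A B" "i \<in> A" "\<And>j. j \<in> A - {i} \<Longrightarrow> f j = g j"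
  shows "f i = g i"
proof -
  obtain j where j: "j \<in> A" "f i = g j"
    using assms(1-3) bij_betw_apply bij_betw_imp_surj_on by (metis imageE)
  have "j = i"
  proof (rule ccontr)
    assume "j \<noteq> i"
    then have "f i = f j" using j assms(4) by simp
    then show False
      using \<open>j \<noteq> i\<close> j(1) assms(1,3) by (auto dest: bij_betw_imp_inj_on inj_onD)
  qed
  then show ?thesis using j by simp
qed

lemma card_colour_class_le:
  assumes "finite A" "inj_on \<pi> A" "\<pi> ` A \<subseteq> A" "\<And>z. z \<in> A \<Longrightarrow> c (\<pi> z) = \<sigma> (c z)"
  shows "card {z \<in> A. c z = i} \<le> card {z \<in> A. c z = \<sigma> i}"
  by (rule card_inj_on_le[where f = \<pi>]) (use assms in \<open>auto intro: inj_on_subset\<close>)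

lemma perm_012_fixing_1:
  fixes \<sigma> :: "nat \<Rightarrow> nat"
  assumes perm: "\<sigma> ` {0, 1, 2} = {0, 1, 2}" and "\<sigma> 1 = 1"
  shows "(\<sigma> 0 = 0 \<and> \<sigma> 2 = 2) \<or> (\<sigma> 0 = 2 \<and> \<sigma> 2 = 0)"
proof -
  have inj: "inj_on \<sigma> {0, 1, 2}"
    using finite_image_eq_imp_bij_betw[OF perm] by (simp add: bij_betw_def)
  have "\<sigma> 0 \<noteq> \<sigma> 1" "\<sigma> 2 \<noteq> \<sigma> 1" "\<sigma> 0 \<noteq> \<sigma> 2"
    by (rule inj_on_contraD[OF inj]; simp)+
  moreover have "\<sigma> 0 \<in> {0, 1, 2}" "\<sigma> 2 \<in> {0, 1, 2}"
    using perm by blast+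
  ultimately show ?thesis
    using \<open>\<sigma> 1 = 1\<close> by auto
qed

locale flag_map =
  fixes \<Phi> :: "'f set" and r0 r1 r2 :: "'f \<Rightarrow> 'f"
  assumes is_map: "is_map \<Phi> r0 r1 r2"
begin

abbreviation "vert_of \<equiv> gen_orb [r1, r2]"
abbreviation "edge_of \<equiv> gen_orb [r0, r2]"
abbreviation "face_of \<equiv> gen_orb [r0, r1]"
abbreviation "verts \<equiv> map_vertices \<Phi> r0 r1 r2"
abbreviation "edges \<equiv> map_edges \<Phi> r0 r1 r2"
abbreviation "faces \<equiv> map_faces \<Phi> r0 r1 r2"
abbreviation "ends \<equiv> edge_ends \<Phi> r0 r1 r2"
abbreviation "bverts \<equiv> bary_verts \<Phi> r0 r1 r2"

lemma finite_flags: "finite \<Phi>"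
  and flags_nonempty: "\<Phi> \<noteq> {}"
  using is_map by (auto simp: is_map_def)

lemma r_closed: "x \<in> \<Phi> \<Longrightarrow> r0 x \<in> \<Phi>" "x \<in> \<Phi> \<Longrightarrow> r1 x \<in> \<Phi>" "x \<in> \<Phi> \<Longrightarrow> r2 x \<in> \<Phi>"
  and r_involutive: "x \<in> \<Phi> \<Longrightarrow> r0 (r0 x) = x" "x \<in> \<Phi> \<Longrightarrow> r1 (r1 x) = x" "x \<in> \<Phi> \<Longrightarrow> r2 (r2 x) = x"
  and r_fixpoint_free: "x \<in> \<Phi> \<Longrightarrow> r0 x \<noteq> x" "x \<in> \<Phi> \<Longrightarrow> r1 x \<noteq> x" "x \<in> \<Phi> \<Longrightarrow> r2 x \<noteq> x"
  and r0_r2_commute: "x \<in> \<Phi> \<Longrightarrow> r0 (r2 x) = r2 (r0 x)"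
  and flags_connected: "x \<in> \<Phi> \<Longrightarrow> y \<in> \<Phi> \<Longrightarrow> y \<in> gen_orb [r0, r1, r2] x"
  using is_map by (auto simp: is_map_def)

sublocale vertex_orbits: involution_orbits \<Phi> "[r1, r2]"
  by unfold_locales (auto simp: r_closed r_involutive)
sublocale edge_orbits: involution_orbits \<Phi> "[r0, r2]"
  by unfold_locales (auto simp: r_closed r_involutive)
sublocale face_orbits: involution_orbits \<Phi> "[r0, r1]"
  by unfold_locales (auto simp: r_closed r_involutive)
sublocale flag_orbits: involution_orbits \<Phi> "[r0, r1, r2]"
  by unfold_locales (auto simp: r_closed r_involutive)

lemma orbit_invariance [simp]:
  "x \<in> \<Phi> \<Longrightarrow> vert_of (r1 x) = vert_of x" "x \<in> \<Phi> \<Longrightarrow> vert_of (r2 x) = vert_of x"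
  "x \<in> \<Phi> \<Longrightarrow> edge_of (r0 x) = edge_of x" "x \<in> \<Phi> \<Longrightarrow> edge_of (r2 x) = edge_of x"
  "x \<in> \<Phi> \<Longrightarrow> face_of (r0 x) = face_of x" "x \<in> \<Phi> \<Longrightarrow> face_of (r1 x) = face_of x"
  by (simp_all add: vertex_orbits.gen_orb_apply edge_orbits.gen_orb_apply face_orbits.gen_orb_apply)

lemma finite_verts: "finite verts"
  and finite_edges: "finite edges"
  and finite_faces: "finite faces"
  using finite_flags by (simp_all add: map_vertices_def map_edges_def map_faces_def)

lemma edge_of_in_edges: "x \<in> \<Phi> \<Longrightarrow> edge_of x \<in> edges"
  by (simp add: map_edges_def)

lemma edge_of_subset:
  assumes "x \<in> \<Phi>"
  shows "edge_of x \<subseteq> {x, r0 x, r2 x, r0 (r2 x)}"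
proof
  fix y assume "y \<in> edge_of x"
  then show "y \<in> {x, r0 x, r2 x, r0 (r2 x)}"
    by (induction rule: gen_orb_induct) (use assms r_closed r_involutive r0_r2_commute in auto)
qed

lemma card_flags_le_4_card_edges: "card \<Phi> \<le> 4 * card edges"
proof -
  have "card (edge_of x) \<le> 4" if x: "x \<in> \<Phi>" for x
  proof -
    have "card (edge_of x) \<le> card {x, r0 x, r2 x, r0 (r2 x)}"
      using edge_of_subset[OF x] by (simp add: card_mono)
    also have "\<dots> \<le> 4"
      by (simp add: card_insert_if)
    finally show ?thesis .
  qed
  then show ?thesis
    unfolding map_edges_def by (rule edge_orbits.card_le_mult_card_orbits[OF finite_flags])
qed

lemma ends_edge_of:
  assumes x: "x \<in> \<Phi>"
  shows "ends (edge_of x) = {vert_of x, vert_of (r0 x)}"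
proof
  have "x \<in> vert_of x" "x \<in> edge_of x" "r0 x \<in> vert_of (r0 x)"
    by (rule gen_orb_self)+
  moreover have "r0 x \<in> edge_of x"
    by (rule gen_orb_step[OF gen_orb_self]) simp
  ultimately show "{vert_of x, vert_of (r0 x)} \<subseteq> ends (edge_of x)"
    using x r_closed unfolding edge_ends_def map_vertices_def by blast
next
  show "ends (edge_of x) \<subseteq> {vert_of x, vert_of (r0 x)}"
  proof
    fix v assume "v \<in> ends (edge_of x)"
    then have "v \<in> verts" "v \<inter> edge_of x \<noteq> {}"
      by (simp_all add: edge_ends_def)
    then obtain y z where y: "y \<in> \<Phi>" "v = vert_of y" and z: "z \<in> vert_of y" "z \<in> edge_of x"
      unfolding map_vertices_def by blast
    have v: "v = vert_of z"
      using vertex_orbits.gen_orb_eq[OF y(1) z(1)] y(2) by simp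
    have "z \<in> {x, r0 x, r2 x, r0 (r2 x)}"
      using edge_of_subset[OF x] z(2) by blast
    then consider "z = x" | "z = r2 x" | "z = r0 x" | "z = r0 (r2 x)"
      by blast
    then show "v \<in> {vert_of x, vert_of (r0 x)}"
      by cases (simp_all add: v x r_closed r0_r2_commute)
  qed
qed

definition flag_cell :: "nat \<Rightarrow> 'f \<Rightarrow> 'f set" where
  "flag_cell i x = (if i = 0 then vert_of x else if i = 1 then edge_of x else face_of x)"

definition flag_triangle :: "'f \<Rightarrow> (nat \<times> 'f set) set" where
  "flag_triangle x = (\<lambda>i. (i, flag_cell i x)) ` {0, 1, 2}"

lemma bary_tris_eq: "bary_tris \<Phi> r0 r1 r2 = flag_triangle ` \<Phi>"
  by (simp add: bary_tris_def flag_triangle_def flag_cell_def)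

lemma bary_verts_eq: "bverts = \<Union> (flag_triangle ` \<Phi>)"
  by (auto simp: bary_verts_def flag_triangle_def flag_cell_def
      map_vertices_def map_edges_def map_faces_def)

lemma flag_cell_shared:
  assumes "x \<in> \<Phi>" "g \<in> set [r0, r1, r2]"
  obtains i where "i \<in> {0, 1, 2}" "\<And>j. j \<in> {0, 1, 2} - {i} \<Longrightarrow> flag_cell j (g x) = flag_cell j x"
proof -
  consider "g = r0" | "g = r1" | "g = r2"
    using assms(2) by auto
  then show thesis
  proof cases
    case 1
    show thesis by (rule that[of 0]) (auto simp: flag_cell_def 1 assms(1))
  next
    case 2
    show thesis by (rule that[of 1]) (auto simp: flag_cell_def 2 assms(1))
  next
    case 3
    show thesis by (rule that[of 2]) (auto simp: flag_cell_def 3 assms(1))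
  qed
qed

definition tri_colours :: "(nat \<times> 'f set \<Rightarrow> nat \<times> 'f set) \<Rightarrow> 'f \<Rightarrow> nat \<Rightarrow> nat" where
  "tri_colours \<pi> x i = fst (\<pi> (i, flag_cell i x))"

lemma tri_colours_perm:
  assumes "\<pi> \<in> bary_aut_uncol \<Phi> r0 r1 r2" "x \<in> \<Phi>"
  shows "tri_colours \<pi> x ` {0, 1, 2} = {0, 1, 2}"
proof -
  have "(\<lambda>T. \<pi> ` T) ` flag_triangle ` \<Phi> = flag_triangle ` \<Phi>"
    using assms(1) unfolding bary_aut_uncol_def bary_tris_eq by blast
  then have "\<pi> ` flag_triangle x \<in> flag_triangle ` \<Phi>"
    using assms(2) by blast
  then obtain y where "\<pi> ` flag_triangle x = flag_triangle y"
    by blast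
  then have "fst ` \<pi> ` flag_triangle x = {0, 1, 2}"
    by (simp add: flag_triangle_def image_image)
  then show ?thesis
    by (simp add: tri_colours_def flag_triangle_def image_image)
qed

text \<open>Adjacent flags span triangles sharing two vertices, which pins down the colour of the third.\<close>

lemma tri_colours_step:
  assumes \<pi>: "\<pi> \<in> bary_aut_uncol \<Phi> r0 r1 r2"
    and x: "x \<in> \<Phi>" and g: "g \<in> set [r0, r1, r2]" and i: "i \<in> {0, 1, 2}"
  shows "tri_colours \<pi> (g x) i = tri_colours \<pi> x i"
proof -
  obtain k where k: "k \<in> {0, 1, 2}"
    and shared: "\<And>j. j \<in> {0, 1, 2} - {k} \<Longrightarrow> flag_cell j (g x) = flag_cell j x"
    using flag_cell_shared[OF x g] by blast
  have bij: "bij_betw (tri_colours \<pi> y) {0, 1, 2} {0, 1, 2}" if "y \<in> \<Phi>" for y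
    using tri_colours_perm[OF \<pi> that] by (rule finite_image_eq_imp_bij_betw) simp
  have "g x \<in> \<Phi>"
    using g x r_closed by auto
  then have "tri_colours \<pi> (g x) k = tri_colours \<pi> x k"
    using bij_betw_agree_off_point[OF bij bij[OF x] k] shared by (simp add: tri_colours_def)
  then show ?thesis
    using shared[of i] i by (cases "i = k") (auto simp: tri_colours_def)
qed

lemma bary_aut_uncol_permutes_colours:
  assumes \<pi>: "\<pi> \<in> bary_aut_uncol \<Phi> r0 r1 r2"
  obtains \<sigma> where "\<sigma> ` {0, 1, 2} = {0, 1, 2}"
    "\<And>z. z \<in> bverts \<Longrightarrow> fst (\<pi> z) = \<sigma> (fst z)"
proof -
  obtain x0 where x0: "x0 \<in> \<Phi>"
    using flags_nonempty by blast
  have const: "tri_colours \<pi> y i = tri_colours \<pi> x0 i" if "y \<in> \<Phi>" "i \<in> {0, 1, 2}" for y i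
    using flags_connected[OF x0 that(1)]
  proof (induction rule: gen_orb_induct)
    case base
    show ?case by (rule refl)
  next
    case (step z g)
    then show ?case
      using tri_colours_step[OF \<pi>] flag_orbits.gen_orb_subset[OF x0] that(2) by auto
  qed
  show thesis
  proof
    show "tri_colours \<pi> x0 ` {0, 1, 2} = {0, 1, 2}"
      by (rule tri_colours_perm[OF \<pi> x0])
  next
    fix z assume "z \<in> bverts"
    then obtain y i where "y \<in> \<Phi>" "i \<in> {0, 1, 2}" "z = (i, flag_cell i y)"
      by (auto simp: bary_verts_eq flag_triangle_def)
    then show "fst (\<pi> z) = tri_colours \<pi> x0 (fst z)"
      using const by (simp add: tri_colours_def)
  qed
qed

lemma card_bary_colour_classes:
  "card {z \<in> bverts. fst z = 0} = card verts"
  "card {z \<in> bverts. fst z = 1} = card edges"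
  "card {z \<in> bverts. fst z = 2} = card faces"
proof -
  have "{z \<in> bverts. fst z = 0} = {0} \<times> verts"
    "{z \<in> bverts. fst z = 1} = {1} \<times> edges"
    "{z \<in> bverts. fst z = 2} = {2} \<times> faces"
    by (auto simp: bary_verts_def)
  then show "card {z \<in> bverts. fst z = 0} = card verts"
    "card {z \<in> bverts. fst z = 1} = card edges"
    "card {z \<in> bverts. fst z = 2} = card faces"
    by (simp_all only: card_cartesian_product_singleton)
qed

lemma bary_colour_perm_fixes_1:
  assumes "card verts < card edges" "card faces < card edges"
    and \<pi>: "\<pi> \<in> bary_aut_uncol \<Phi> r0 r1 r2"
    and \<sigma>: "\<sigma> ` {0, 1, 2} = {0, 1, 2}"
    and colour: "\<And>z. z \<in> bverts \<Longrightarrow> fst (\<pi> z) = \<sigma> (fst z)"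
  shows "\<sigma> 1 = 1"
proof -
  have "finite bverts"
    using finite_verts finite_edges finite_faces by (simp add: bary_verts_def)
  moreover have "inj_on \<pi> bverts" "\<pi> ` bverts \<subseteq> bverts"
    using \<pi> by (auto simp: bary_aut_uncol_def bij_betw_def)
  ultimately have "card {z \<in> bverts. fst z = 1} \<le> card {z \<in> bverts. fst z = \<sigma> 1}"
    using colour by (rule card_colour_class_le)
  then have "card edges \<le> card {z \<in> bverts. fst z = \<sigma> 1}"
    by (simp only: card_bary_colour_classes)
  moreover have "\<sigma> 1 \<in> {0, 1, 2}"
    using \<sigma> by blast
  ultimately show "\<sigma> 1 = 1"
    using assms(1,2) by (auto simp: card_bary_colour_classes)
qed

lemma bary_aut_uncol_subset_if_edges_dominate:
  assumes "card verts < card edges" "card faces < card edges"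
  shows "bary_aut_uncol \<Phi> r0 r1 r2 \<subseteq> bary_aut_col \<Phi> r0 r1 r2 \<union> bary_aut_swap \<Phi> r0 r1 r2"
proof
  fix \<pi> assume \<pi>: "\<pi> \<in> bary_aut_uncol \<Phi> r0 r1 r2"
  obtain \<sigma> where \<sigma>: "\<sigma> ` {0, 1, 2} = {0, 1, 2}"
    and colour: "\<And>z. z \<in> bverts \<Longrightarrow> fst (\<pi> z) = \<sigma> (fst z)"
    using bary_aut_uncol_permutes_colours[OF \<pi>] by blast
  have "\<sigma> 1 = 1"
    using assms \<pi> \<sigma> colour by (rule bary_colour_perm_fixes_1)
  have colours: "fst z \<in> {0, 1, 2}" if "z \<in> bverts" for z
    using that by (auto simp: bary_verts_def)
  have "(\<sigma> 0 = 0 \<and> \<sigma> 2 = 2) \<or> (\<sigma> 0 = 2 \<and> \<sigma> 2 = 0)"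
    using \<sigma> \<open>\<sigma> 1 = 1\<close> by (rule perm_012_fixing_1)
  then show "\<pi> \<in> bary_aut_col \<Phi> r0 r1 r2 \<union> bary_aut_swap \<Phi> r0 r1 r2"
  proof
    assume "\<sigma> 0 = 0 \<and> \<sigma> 2 = 2"
    then have "fst (\<pi> z) = fst z" if "z \<in> bverts" for z
      using colour[OF that] colours[OF that] \<open>\<sigma> 1 = 1\<close> by auto
    then show ?thesis
      using \<pi> by (simp add: bary_aut_col_def)
  next
    assume "\<sigma> 0 = 2 \<and> \<sigma> 2 = 0"
    then have "(fst z = 0 \<longrightarrow> fst (\<pi> z) = 2) \<and> (fst z = 2 \<longrightarrow> fst (\<pi> z) = 0) \<and>
        (fst z = 1 \<longrightarrow> fst (\<pi> z) = 1)" if "z \<in> bverts" for z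
      using colour[OF that] \<open>\<sigma> 1 = 1\<close> by auto
    then show ?thesis
      using \<pi> by (simp add: bary_aut_swap_def)
  qed
qed

end

section \<open>Counting flags in a 3-connected map\<close>

lemma three_connected_degree_ge_3:
  fixes V :: "'v set" and adj :: "'v \<Rightarrow> 'v \<Rightarrow> bool"
  assumes "finite V" "4 \<le> card V" "v \<in> V" "\<not> adj v v"
    and connected: "\<And>S u w. S \<subseteq> V \<Longrightarrow> card S \<le> 2 \<Longrightarrow> u \<in> V - S \<Longrightarrow> w \<in> V - S \<Longrightarrow>
      (u, w) \<in> {(a, b). a \<in> V - S \<and> b \<in> V - S \<and> adj a b}\<^sup>*"
  shows "3 \<le> card {w \<in> V. adj v w}"
proof (rule ccontr)
  let ?N = "{w \<in> V. adj v w}"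
  assume "\<not> 3 \<le> card ?N"
  then have small: "card ?N \<le> 2"
    by simp
  have "card (insert v ?N) < card V"
    using small assms(2) card_insert_le_m1[of 3 ?N v] by (simp add: card_insert_if)
  moreover have "finite (insert v ?N)"
    using assms(1) by simp
  ultimately have "\<not> V \<subseteq> insert v ?N"
    using card_mono leD by blast
  then obtain w where w: "w \<in> V" "w \<noteq> v" "w \<notin> ?N"
    by blast
  have "(v, w) \<in> {(a, b). a \<in> V - ?N \<and> b \<in> V - ?N \<and> adj a b}\<^sup>*"
    by (rule connected) (use small assms(3,4) w in auto)
  then obtain a where "(v, a) \<in> {(a, b). a \<in> V - ?N \<and> b \<in> V - ?N \<and> adj a b}"
    using w(2) by (cases rule: converse_rtranclE) auto
  then show False
    by auto
qed

lemma card_ge_6_of_three_disjoint_subsets: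
  assumes "finite S" "A \<union> B \<union> C \<subseteq> S"
    and "A \<inter> B = {}" "A \<inter> C = {}" "B \<inter> C = {}"
    and "2 \<le> card A" "2 \<le> card B" "2 \<le> card C"
  shows "6 \<le> card S"
proof -
  have fin: "finite A" "finite B" "finite C"
    using assms(1,2) finite_subset by blast+
  have "card A + card B + card C = card (A \<union> B \<union> C)"
    using fin assms(3-5) by (simp add: card_Un_disjoint Int_Un_distrib2)
  also have "\<dots> \<le> card S"
    using card_mono[OF assms(1,2)] .
  finally show ?thesis
    using assms(6-8) by linarith
qed

locale three_connected_flag_map = flag_map +
  assumes three_connected: "three_connected_map \<Phi> r0 r1 r2"
begin

abbreviation "adj \<equiv> map_adj \<Phi> r0 r1 r2"

lemma card_verts_ge_4: "4 \<le> card verts"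
  and card_ends: "e \<in> edges \<Longrightarrow> card (ends e) = 2"
  and inj_on_ends: "inj_on ends edges"
  and verts_connected: "S \<subseteq> verts \<Longrightarrow> card S \<le> 2 \<Longrightarrow> u \<in> verts - S \<Longrightarrow> w \<in> verts - S \<Longrightarrow>
    (u, w) \<in> {(a, b). a \<in> verts - S \<and> b \<in> verts - S \<and> adj a b}\<^sup>*"
  using three_connected unfolding three_connected_map_def Let_def by auto

lemma vert_of_r0_neq: "x \<in> \<Phi> \<Longrightarrow> vert_of (r0 x) \<noteq> vert_of x"
  using card_ends[OF edge_of_in_edges] ends_edge_of by fastforce

lemma not_adj_self: "\<not> adj v v"
proof
  assume "adj v v"
  then obtain e where "e \<in> edges" "ends e = {v}"
    by (auto simp: map_adj_def)
  then show False
    using card_ends[of e] by simp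
qed

lemma card_neighbours_ge_3:
  assumes "v \<in> verts"
  shows "3 \<le> card {w \<in> verts. adj v w}"
  using finite_verts card_verts_ge_4 assms not_adj_self verts_connected
  by (rule three_connected_degree_ge_3)

lemma three_neighbours:
  assumes "v \<in> verts"
  obtains w1 w2 w3 where "adj v w1" "adj v w2" "adj v w3" "w1 \<noteq> w2" "w1 \<noteq> w3" "w2 \<noteq> w3"
proof -
  obtain N where N: "N \<subseteq> {w \<in> verts. adj v w}" "card N = 3"
    using card_neighbours_ge_3[OF assms] obtain_subset_with_card_n by meson
  then obtain w1 w2 w3 where w: "N = {w1, w2, w3}" "w1 \<noteq> w2" "w1 \<noteq> w3" "w2 \<noteq> w3"
    by (metis card_3_iff)
  then have "adj v w1" "adj v w2" "adj v w3"
    using N(1) by auto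
  then show thesis
    using w(2-4) by (rule that)
qed

lemma flag_pair_at_adjacent_vertex:
  assumes "adj v w"
  obtains y where "y \<in> \<Phi>" "{y, r2 y} \<subseteq> v" "{y, r2 y} \<subseteq> edge_of y" "card {y, r2 y} = 2"
    "ends (edge_of y) = {v, w}"
proof -
  obtain e where e: "e \<in> edges" "ends e = {v, w}"
    using assms by (auto simp: map_adj_def)
  then have "v \<in> verts" "v \<inter> e \<noteq> {}"
    by (auto simp: edge_ends_def)
  then obtain y x where y: "y \<in> v" "y \<in> e" and x: "x \<in> \<Phi>" "e = edge_of x"
    using e(1) by (auto simp: map_edges_def)
  have "y \<in> \<Phi>"
    using edge_orbits.gen_orb_subset[OF x(1)] x(2) y(2) by blast
  moreover have "edge_of y = e"
    using edge_orbits.gen_orb_eq[OF x(1)] x(2) y(2) by simp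
  moreover have "v = vert_of y"
    using \<open>v \<in> verts\<close> y(1) vertex_orbits.gen_orb_eq by (auto simp: map_vertices_def)
  moreover have "y \<in> edge_of y" "r2 y \<in> edge_of y" "y \<in> vert_of y" "r2 y \<in> vert_of y"
    by (rule gen_orb_self | rule gen_orb_step[OF gen_orb_self], simp)+
  moreover have "card {y, r2 y} = 2"
    using r_fixpoint_free(3)[OF \<open>y \<in> \<Phi>\<close>] by simp
  ultimately show thesis
    using that e(2) by auto
qed

lemma card_vert_of_ge_6:
  assumes x: "x \<in> \<Phi>"
  shows "6 \<le> card (vert_of x)"
proof -
  let ?v = "vert_of x"
  have "?v \<in> verts"
    using x by (simp add: map_vertices_def)
  then obtain w1 w2 w3 where adj: "adj ?v w1" "adj ?v w2" "adj ?v w3"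
    and distinct: "w1 \<noteq> w2" "w1 \<noteq> w3" "w2 \<noteq> w3"
    by (rule three_neighbours)
  have not_v: "w1 \<noteq> ?v" "w2 \<noteq> ?v"
    using adj not_adj_self by auto
  obtain y1 where y1: "y1 \<in> \<Phi>" "{y1, r2 y1} \<subseteq> ?v" "{y1, r2 y1} \<subseteq> edge_of y1"
    "card {y1, r2 y1} = 2" "ends (edge_of y1) = {?v, w1}"
    using flag_pair_at_adjacent_vertex[OF adj(1)] .
  obtain y2 where y2: "y2 \<in> \<Phi>" "{y2, r2 y2} \<subseteq> ?v" "{y2, r2 y2} \<subseteq> edge_of y2"
    "card {y2, r2 y2} = 2" "ends (edge_of y2) = {?v, w2}"
    using flag_pair_at_adjacent_vertex[OF adj(2)] .
  obtain y3 where y3: "y3 \<in> \<Phi>" "{y3, r2 y3} \<subseteq> ?v" "{y3, r2 y3} \<subseteq> edge_of y3"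
    "card {y3, r2 y3} = 2" "ends (edge_of y3) = {?v, w3}"
    using flag_pair_at_adjacent_vertex[OF adj(3)] .
  have "{?v, w1} \<noteq> {?v, w2}" "{?v, w1} \<noteq> {?v, w3}" "{?v, w2} \<noteq> {?v, w3}"
    using distinct not_v by (simp_all add: doubleton_eq_iff)
  then have "edge_of y1 \<noteq> edge_of y2" "edge_of y1 \<noteq> edge_of y3" "edge_of y2 \<noteq> edge_of y3"
    using y1(5) y2(5) y3(5) by metis+
  then have disjoint: "edge_of y1 \<inter> edge_of y2 = {}" "edge_of y1 \<inter> edge_of y3 = {}"
    "edge_of y2 \<inter> edge_of y3 = {}"
    using y1(1) y2(1) y3(1) by (simp_all add: edge_orbits.gen_orb_disjoint)
  show ?thesis
  proof (rule card_ge_6_of_three_disjoint_subsets[where A = "{y1, r2 y1}" and B = "{y2, r2 y2}"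
        and C = "{y3, r2 y3}"])
    show "finite ?v"
      using vertex_orbits.gen_orb_subset[OF x] finite_flags finite_subset by blast
    show "{y1, r2 y1} \<union> {y2, r2 y2} \<union> {y3, r2 y3} \<subseteq> ?v"
      using y1(2) y2(2) y3(2) by (simp only: Un_least)
    show "{y1, r2 y1} \<inter> {y2, r2 y2} = {}" "{y1, r2 y1} \<inter> {y3, r2 y3} = {}"
      "{y2, r2 y2} \<inter> {y3, r2 y3} = {}"
      using Int_mono[OF y1(3) y2(3)] Int_mono[OF y1(3) y3(3)] Int_mono[OF y2(3) y3(3)] disjoint
      by (simp_all only: subset_empty)
  qed (simp_all add: y1(4) y2(4) y3(4))
qed

lemma edge_of_flag_at_same_vertex:
  assumes x: "x \<in> \<Phi>" and z: "z \<in> edge_of x" "vert_of z = vert_of x"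
  shows "z = x \<or> z = r2 x"
proof -
  have "vert_of (r0 (r2 x)) = vert_of (r0 x)"
    using x r_closed r0_r2_commute by simp
  then show ?thesis
    using edge_of_subset[OF x] z vert_of_r0_neq[OF x] by auto
qed

lemma edge_of_r1_neq:
  assumes x: "x \<in> \<Phi>"
  shows "edge_of (r1 x) \<noteq> edge_of x"
proof
  assume "edge_of (r1 x) = edge_of x"
  then have "r1 x \<in> edge_of x"
    using gen_orb_self[of "r1 x" "[r0, r2]"] by simp
  moreover have "vert_of (r1 x) = vert_of x"
    using x by simp
  ultimately have r1_r2: "r1 x = r2 x"
    using edge_of_flag_at_same_vertex[OF x] r_fixpoint_free(2)[OF x] by blast
  have "vert_of x \<subseteq> {x, r1 x}"
  proof
    fix z assume "z \<in> vert_of x"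
    then show "z \<in> {x, r1 x}"
      by (induction rule: gen_orb_induct) (use r1_r2 r_involutive(2,3)[OF x] in auto)
  qed
  then have "card (vert_of x) \<le> card {x, r1 x}"
    by (rule card_mono[rotated]) simp
  also have "\<dots> \<le> 2"
    by (simp add: card_insert_if)
  finally show False
    using card_vert_of_ge_6[OF x] by simp
qed

lemma edge_of_r1_r0_neq:
  assumes x: "x \<in> \<Phi>"
  shows "edge_of (r1 (r0 x)) \<noteq> edge_of (r1 x)"
proof
  assume eq: "edge_of (r1 (r0 x)) = edge_of (r1 x)"
  have flags: "r0 x \<in> \<Phi>" "r1 x \<in> \<Phi>" "r1 (r0 x) \<in> \<Phi>"
    using x r_closed by auto
  have "vert_of x \<in> ends (edge_of (r1 x))"
    using ends_edge_of[OF flags(2)] x by simp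
  moreover have "vert_of (r0 x) \<in> ends (edge_of (r1 (r0 x)))"
    using ends_edge_of[OF flags(3)] flags(1) by simp
  ultimately have sub: "ends (edge_of x) \<subseteq> ends (edge_of (r1 x))"
    using ends_edge_of[OF x] eq by simp
  have card: "card (ends (edge_of x)) = card (ends (edge_of (r1 x)))"
    using card_ends edge_of_in_edges x flags by simp
  have "finite (ends (edge_of (r1 x)))"
    using card_ends[OF edge_of_in_edges[OF flags(2)]] by (intro card_ge_0_finite) simp
  then have "ends (edge_of x) = ends (edge_of (r1 x))"
    using sub card by (rule card_subset_eq)
  then have "edge_of x = edge_of (r1 x)"
    by (rule inj_onD[OF inj_on_ends _ edge_of_in_edges[OF x] edge_of_in_edges[OF flags(2)]])
  then show False
    using edge_of_r1_neq[OF x] by simp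
qed

lemma card_face_of_ge_6:
  assumes x: "x \<in> \<Phi>"
  shows "6 \<le> card (face_of x)"
proof -
  have flags: "r0 x \<in> \<Phi>" "r1 x \<in> \<Phi>" "r1 (r0 x) \<in> \<Phi>"
    using x r_closed by auto
  have edge_pair: "{y, r0 y} \<subseteq> edge_of y" "card {y, r0 y} = 2" if y: "y \<in> \<Phi>" for y
  proof -
    have "y \<in> edge_of y" "r0 y \<in> edge_of y"
      by (rule gen_orb_self | rule gen_orb_step[OF gen_orb_self], simp)+
    then show "{y, r0 y} \<subseteq> edge_of y"
      by blast
    show "card {y, r0 y} = 2"
      using r_fixpoint_free(1)[OF y] by simp
  qed
  have "edge_of x \<noteq> edge_of (r1 x)" "edge_of x \<noteq> edge_of (r1 (r0 x))"
    "edge_of (r1 x) \<noteq> edge_of (r1 (r0 x))"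
    using edge_of_r1_neq[OF x] edge_of_r1_neq[OF flags(1)] edge_of_r1_r0_neq[OF x] x
    by (auto simp: eq_commute)
  then have disjoint: "edge_of x \<inter> edge_of (r1 x) = {}" "edge_of x \<inter> edge_of (r1 (r0 x)) = {}"
    "edge_of (r1 x) \<inter> edge_of (r1 (r0 x)) = {}"
    using x flags by (simp_all add: edge_orbits.gen_orb_disjoint)
  have "y \<in> face_of x \<Longrightarrow> r0 y \<in> face_of x" "y \<in> face_of x \<Longrightarrow> r1 y \<in> face_of x" for y
    by (simp_all add: gen_orb_step)
  then have in_face: "{x, r0 x} \<union> {r1 x, r0 (r1 x)} \<union> {r1 (r0 x), r0 (r1 (r0 x))} \<subseteq> face_of x"
    using gen_orb_self[of x "[r0, r1]"] by simp
  show ?thesis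
  proof (rule card_ge_6_of_three_disjoint_subsets[OF _ in_face])
    show "finite (face_of x)"
      using face_orbits.gen_orb_subset[OF x] finite_flags finite_subset by blast
    show "{x, r0 x} \<inter> {r1 x, r0 (r1 x)} = {}" "{x, r0 x} \<inter> {r1 (r0 x), r0 (r1 (r0 x))} = {}"
      "{r1 x, r0 (r1 x)} \<inter> {r1 (r0 x), r0 (r1 (r0 x))} = {}"
      using Int_mono[OF edge_pair(1)[OF x] edge_pair(1)[OF flags(2)]]
        Int_mono[OF edge_pair(1)[OF x] edge_pair(1)[OF flags(3)]]
        Int_mono[OF edge_pair(1)[OF flags(2)] edge_pair(1)[OF flags(3)]] disjoint
      by (simp_all only: subset_empty)
  qed (simp_all add: edge_pair(2) x flags)
qed

lemma card_verts_lt_card_edges: "card verts < card edges"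
proof -
  have "6 * card verts \<le> card \<Phi>"
    unfolding map_vertices_def
    by (rule vertex_orbits.mult_card_orbits_le_card[OF finite_flags card_vert_of_ge_6])
  then show ?thesis
    using card_flags_le_4_card_edges card_verts_ge_4 by linarith
qed

lemma card_faces_lt_card_edges: "card faces < card edges"
proof -
  have "6 * card faces \<le> card \<Phi>"
    unfolding map_faces_def
    by (rule face_orbits.mult_card_orbits_le_card[OF finite_flags card_face_of_ge_6])
  moreover have "0 < card faces"
    using finite_faces flags_nonempty by (auto simp: map_faces_def card_gt_0_iff)
  ultimately show ?thesis
    using card_flags_le_4_card_edges by linarith
qed

end

theorem corollary1:
  fixes \<Phi> :: "'f set" and r0 r1 r2 :: "'f \<Rightarrow> 'f"
  assumes "polyhedral_map \<Phi> r0 r1 r2"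
  shows "bary_aut_uncol \<Phi> r0 r1 r2 = bary_aut_col \<Phi> r0 r1 r2 \<union> bary_aut_swap \<Phi> r0 r1 r2"
proof -
  interpret three_connected_flag_map \<Phi> r0 r1 r2
    using assms by unfold_locales (simp_all add: polyhedral_map_def)
  have "bary_aut_uncol \<Phi> r0 r1 r2 \<subseteq> bary_aut_col \<Phi> r0 r1 r2 \<union> bary_aut_swap \<Phi> r0 r1 r2"
    using card_verts_lt_card_edges card_faces_lt_card_edges
    by (rule bary_aut_uncol_subset_if_edges_dominate)
  moreover have "bary_aut_col \<Phi> r0 r1 r2 \<union> bary_aut_swap \<Phi> r0 r1 r2 \<subseteq> bary_aut_uncol \<Phi> r0 r1 r2"
    by (auto simp: bary_aut_col_def bary_aut_swap_def)
  ultimately show ?thesis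
    by (rule antisym)
qed

end
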